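(* Let $1\le p\le\infty$ and $E=\mathcal{L}^p(I)$. If $(f_m)$ is a Schauder basis of $E$, then $(f_m*_T0)$ is a Schauder sequence in $E$.
   Context: Let $N\ge 2$, $I=[x_0,x_N]$, $\Delta: x_0<\dots<x_N$ a partition, $L_n(x)=a_nx+b_n$ affine with $L_n(x_0)=x_{n-1}$, $L_n(x_N)=x_n$, $I_1=[x_0,x_1]$, $I_n=(x_{n-1},x_n]$ for $n\ge2$, and $\alpha=(\alpha_1,\dots,\alpha_N)\in(\mathcal{L}^\infty(I))^N$ with $\Lambda:=\operatorname{ess\,sup}\{|\alpha_n(x)|:x\in I,n=1,\dots,N\}<1$. For $f,b\in E$, $f*_Tb$ is the unique fixed point in $E$ of the contraction $Tg(x):=f(x)+\alpha_n(L_n^{-1}(x))(g-b)(L_n^{-1}(x))$, $x\in I_n$; $0$ is the null function. A Schauder sequence is a sequence that is a Schauder basis of its closed linear span. *)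

theory Defs
  imports "HOL-Analysis.Analysis" "HOL-Probability.Essential_Supremum"
begin

definition Ival :: "(nat \<Rightarrow> real) \<Rightarrow> nat \<Rightarrow> real set" where
  "Ival xs N = {xs 0 .. xs N}"

definition partition :: "(nat \<Rightarrow> real) \<Rightarrow> nat \<Rightarrow> bool" where
  "partition xs N \<longleftrightarrow> (\<forall>n<N. xs n < xs (Suc n))"

definition subI :: "(nat \<Rightarrow> real) \<Rightarrow> nat \<Rightarrow> real set" where
  "subI xs n = (if n = 1 then {xs 0 .. xs 1} else {xs (n - 1) <.. xs n})"

(* L_n affine with L_n(x_0) = x_{n-1}, L_n(x_N) = x_n *)
definition Lmap :: "(nat \<Rightarrow> real) \<Rightarrow> nat \<Rightarrow> nat \<Rightarrow> real \<Rightarrow> real" where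
  "Lmap xs N n t = xs (n - 1) + (xs n - xs (n - 1)) / (xs N - xs 0) * (t - xs 0)"

definition Linv :: "(nat \<Rightarrow> real) \<Rightarrow> nat \<Rightarrow> nat \<Rightarrow> real \<Rightarrow> real" where
  "Linv xs N n y = xs 0 + (xs N - xs 0) / (xs n - xs (n - 1)) * (y - xs (n - 1))"

abbreviation lebI :: "(nat \<Rightarrow> real) \<Rightarrow> nat \<Rightarrow> real measure" where
  "lebI xs N \<equiv> lebesgue_on (Ival xs N)"

(* L^p(I), 1 \<le> p \<le> \<infinity>, as a set of (representatives of) functions *)
definition Lp :: "ereal \<Rightarrow> (nat \<Rightarrow> real) \<Rightarrow> nat \<Rightarrow> (real \<Rightarrow> real) set" where
  "Lp p xs N = {f. f \<in> borel_measurable (lebI xs N) \<and>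
      (if p = \<infinity> then esssup (lebI xs N) (\<lambda>x. ereal \<bar>f x\<bar>) < \<infinity>
       else integrable (lebI xs N) (\<lambda>x. \<bar>f x\<bar> powr real_of_ereal p))}"

definition Lp_norm :: "ereal \<Rightarrow> (nat \<Rightarrow> real) \<Rightarrow> nat \<Rightarrow> (real \<Rightarrow> real) \<Rightarrow> real" where
  "Lp_norm p xs N f = (if p = \<infinity> then real_of_ereal (esssup (lebI xs N) (\<lambda>x. ereal \<bar>f x\<bar>))
      else (integral\<^sup>L (lebI xs N) (\<lambda>x. \<bar>f x\<bar> powr real_of_ereal p)) powr (1 / real_of_ereal p))"

definition fractal_T :: "(nat \<Rightarrow> real) \<Rightarrow> nat \<Rightarrow> (nat \<Rightarrow> real \<Rightarrow> real) \<Rightarrow>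
    (real \<Rightarrow> real) \<Rightarrow> (real \<Rightarrow> real) \<Rightarrow> (real \<Rightarrow> real) \<Rightarrow> real \<Rightarrow> real" where
  "fractal_T xs N \<alpha> f b g x = f x + (\<Sum>n\<in>{1..N}. indicator (subI xs n) x *
      (\<alpha> n (Linv xs N n x) * (g (Linv xs N n x) - b (Linv xs N n x))))"

(* f *_T b : the (a.e. unique) fixed point of T in E = L^p(I) *)
definition fractal_fun :: "ereal \<Rightarrow> (nat \<Rightarrow> real) \<Rightarrow> nat \<Rightarrow> (nat \<Rightarrow> real \<Rightarrow> real) \<Rightarrow>
    (real \<Rightarrow> real) \<Rightarrow> (real \<Rightarrow> real) \<Rightarrow> (real \<Rightarrow> real)" where
  "fractal_fun p xs N \<alpha> f b = (SOME g. g \<in> Lp p xs N \<and>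
      Lp_norm p xs N (\<lambda>x. fractal_T xs N \<alpha> f b g x - g x) = 0)"

definition schauder_basis_of :: "ereal \<Rightarrow> (nat \<Rightarrow> real) \<Rightarrow> nat \<Rightarrow> (real \<Rightarrow> real) set \<Rightarrow>
    (nat \<Rightarrow> real \<Rightarrow> real) \<Rightarrow> bool" where
  "schauder_basis_of p xs N X e \<longleftrightarrow> (\<forall>m. e m \<in> X) \<and>
     (\<forall>f\<in>X. \<exists>!c :: nat \<Rightarrow> real.
        (\<lambda>k. Lp_norm p xs N (\<lambda>x. f x - (\<Sum>m<k. c m * e m x))) \<longlonglongrightarrow> 0)"

definition closed_span :: "ereal \<Rightarrow> (nat \<Rightarrow> real) \<Rightarrow> nat \<Rightarrow> (nat \<Rightarrow> real \<Rightarrow> real) \<Rightarrow> (real \<Rightarrow> real) set" where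
  "closed_span p xs N e = {g \<in> Lp p xs N. \<forall>\<epsilon>>0. \<exists>k (c :: nat \<Rightarrow> real).
      Lp_norm p xs N (\<lambda>x. g x - (\<Sum>m<k. c m * e m x)) < \<epsilon>}"

definition schauder_sequence :: "ereal \<Rightarrow> (nat \<Rightarrow> real) \<Rightarrow> nat \<Rightarrow> (nat \<Rightarrow> real \<Rightarrow> real) \<Rightarrow> bool" where
  "schauder_sequence p xs N e \<longleftrightarrow> schauder_basis_of p xs N (closed_span p xs N e) e"

end

theory Submission
  imports Defs
begin

text \<open>Write \<open>A\<close> for the linear part of \<open>T\<close>, \<open>(A g)(x) = \<alpha>_n(L_n^{-1} x) g(L_n^{-1} x)\<close>
  on \<open>I_n\<close>, so that \<open>f *_T 0\<close> solves \<open>g = f + A g\<close>. Since \<open>L_n^{-1}\<close> maps \<open>I_n\<close>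
  affinely onto \<open>I\<close> and the lengths of the \<open>I_n\<close> add up to that of \<open>I\<close>, a change of
  variables gives \<open>\<parallel>A g\<parallel>_p \<le> \<Lambda> \<parallel>g\<parallel>_p\<close>. Hence the Neumann series \<open>\<Sum> A^k f\<close> converges
  almost everywhere to a solution lying in \<open>L^p(I)\<close>, and by Minkowski's inequality
  \<open>(1 - \<Lambda>) \<parallel>u\<parallel> \<le> \<parallel>u - A u\<parallel> \<le> (1 + \<Lambda>) \<parallel>u\<parallel>\<close>: the map \<open>f \<mapsto> f *_T 0\<close> is the inverse of the
  isomorphism \<open>I - A\<close> of \<open>L^p(I)\<close>. An isomorphism carries the Schauder basis \<open>(f_m)\<close> to a
  Schauder sequence; the coefficients of \<open>g\<close> are those of \<open>g - A g\<close> in the basis \<open>(f_m)\<close>.\<close>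

lemma abs_add_powr_le_weighted:
  fixes a b r t :: real
  assumes r: "r \<ge> 1" and t: "0 < t" "t < 1"
  shows "\<bar>a + b\<bar> powr r \<le> t powr (1 - r) * \<bar>a\<bar> powr r + (1 - t) powr (1 - r) * \<bar>b\<bar> powr r"
proof (cases "a = 0 \<or> b = 0")
  case True
  have "1 \<le> t powr (1 - r)" "1 \<le> (1 - t) powr (1 - r)"
    using powr_mono2'[of "1 - r" t 1] powr_mono2'[of "1 - r" "1 - t" 1] r t by auto
  then have "\<bar>a\<bar> powr r \<le> t powr (1 - r) * \<bar>a\<bar> powr r"
    and "\<bar>b\<bar> powr r \<le> (1 - t) powr (1 - r) * \<bar>b\<bar> powr r"
    by (simp_all add: mult_le_cancel_right1)
  moreover have "\<bar>a + b\<bar> powr r = \<bar>a\<bar> powr r + \<bar>b\<bar> powr r"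
    using True by auto
  ultimately show ?thesis by linarith
next
  case False
  define X where "X = \<bar>a\<bar> / t"
  define Y where "Y = \<bar>b\<bar> / (1 - t)"
  have XY: "X > 0" "Y > 0" using False t by (auto simp: X_def Y_def)
  have "\<bar>a + b\<bar> \<le> (1 - (1 - t)) * X + (1 - t) * Y"
    using t by (simp add: X_def Y_def abs_triangle_ineq)
  then have "\<bar>a + b\<bar> powr r \<le> ((1 - (1 - t)) *\<^sub>R X + (1 - t) *\<^sub>R Y) powr r"
    using r by (intro powr_mono2) auto
  also have "\<dots> \<le> (1 - (1 - t)) * X powr r + (1 - t) * Y powr r"
    by (rule convex_onD[OF powr_convex[OF r]]) (use t XY in auto)
  also have "\<dots> = t powr (1 - r) * \<bar>a\<bar> powr r + (1 - t) powr (1 - r) * \<bar>b\<bar> powr r"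
  proof -
    have *: "s * (c / s) powr r = s powr (1 - r) * c powr r" if "0 < s" for s c :: real
      using that by (simp add: powr_divide powr_diff)
    show ?thesis
      using *[of t "\<bar>a\<bar>"] *[of "1 - t" "\<bar>b\<bar>"] t by (simp add: X_def Y_def)
  qed
  finally show ?thesis .
qed

lemma weighted_powr_sum_eq:
  fixes a b r :: real
  assumes "0 < a" "0 < b"
  shows "(a / (a + b)) powr (1 - r) * a powr r + (b / (a + b)) powr (1 - r) * b powr r = (a + b) powr r"
proof -
  have *: "(c / (a + b)) powr (1 - r) * c powr r = c * (a + b) powr (r - 1)" if "0 < c" for c
  proof -
    have "(c / (a + b)) powr (1 - r) * c powr r = (c powr (1 - r) * c powr r) / (a + b) powr (1 - r)"
      using that assms by (simp add: powr_divide)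
    also have "c powr (1 - r) * c powr r = c"
      using that by (simp add: powr_add[symmetric])
    also have "c / (a + b) powr (1 - r) = c * (a + b) powr (r - 1)"
      using powr_minus_divide[of "a + b" "1 - r"] by simp
    finally show ?thesis .
  qed
  have "(a + b) powr r = (a + b) * (a + b) powr (r - 1)"
    using assms powr_add[of "a + b" 1 "r - 1"] by simp
  then show ?thesis
    using *[of a] *[of b] assms by (simp add: distrib_right)
qed

lemma power_powr_commute: "0 < x \<Longrightarrow> (x ^ k) powr a = (x powr a) ^ k"
  for x a :: real
  by (simp add: powr_power powr_realpow[symmetric] powr_powr mult.commute)

lemma powr_le_cancel_base:
  fixes x y r :: real
  assumes "x powr r \<le> y powr r" "0 < r" "0 \<le> y"
  shows "x \<le> y"
proof (rule ccontr)
  assume "\<not> x \<le> y"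
  then have "y powr r < x powr r"
    using assms(2,3) by (intro powr_less_mono2) auto
  then show False
    using assms(1) by simp
qed

lemma geometric_dominated_series:
  fixes a :: "nat \<Rightarrow> real"
  assumes \<tau>: "0 \<le> \<tau>" "\<tau> < 1" and a: "\<And>k. \<bar>a k\<bar> \<le> D * \<tau> ^ k"
  shows "summable a" and "\<bar>suminf a\<bar> \<le> D / (1 - \<tau>)"
proof -
  have sg: "summable (\<lambda>k. D * \<tau> ^ k)"
    using \<tau> by (intro summable_mult summable_geometric) simp
  have sa: "summable (\<lambda>k. \<bar>a k\<bar>)"
    by (rule summable_comparison_test'[OF sg]) (use a in simp)
  then show "summable a" by (rule summable_rabs_cancel)
  have "\<bar>suminf a\<bar> \<le> (\<Sum>k. \<bar>a k\<bar>)" by (rule summable_rabs[OF sa])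
  also have "\<dots> \<le> (\<Sum>k. D * \<tau> ^ k)" by (rule suminf_le[OF a sa sg])
  also have "\<dots> = D / (1 - \<tau>)"
    using \<tau> by (simp add: suminf_mult summable_geometric suminf_geometric)
  finally show "\<bar>suminf a\<bar> \<le> D / (1 - \<tau>)" .
qed

lemma esssup_less_AE_le:
  assumes "esssup M (\<lambda>x. ereal (f x)) < ereal c"
  obtains d where "d < c" "AE x in M. f x \<le> d"
proof (cases "esssup M (\<lambda>x. ereal (f x))")
  case (real d)
  show ?thesis
    using that[of d] assms esssup_AE[of "\<lambda>x. ereal (f x)" M] real by auto
next
  case MInf
  have "AE x in M. f x \<le> c - 1"
    using esssup_AE[of "\<lambda>x. ereal (f x)" M] MInf by (auto elim: eventually_mono)
  then show ?thesis
    using that[of "c - 1"] by simp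
qed (use assms in simp)

lemma esssup_less_1_uniform_bound:
  assumes "finite S" and less: "\<And>n. n \<in> S \<Longrightarrow> esssup M (\<lambda>x. ereal \<bar>\<alpha> n x\<bar>) < 1"
  obtains \<Lambda> where "0 < \<Lambda>" "\<Lambda> < 1" "\<And>n. n \<in> S \<Longrightarrow> AE x in M. \<bar>\<alpha> n x\<bar> \<le> \<Lambda>"
proof -
  have "\<forall>n\<in>S. \<exists>d<1. AE x in M. \<bar>\<alpha> n x\<bar> \<le> d"
    using esssup_less_AE_le[of M "\<lambda>x. \<bar>\<alpha> _ x\<bar>" 1] less by (metis one_ereal_def)
  then obtain d where d: "\<And>n. n \<in> S \<Longrightarrow> d n < 1 \<and> (AE x in M. \<bar>\<alpha> n x\<bar> \<le> d n)"
    by metis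
  define \<Lambda> where "\<Lambda> = Max (insert (1/2) (d ` S))"
  have d_le: "d n \<le> \<Lambda>" if "n \<in> S" for n
    using \<open>finite S\<close> that by (simp add: \<Lambda>_def)
  moreover have "1/2 \<le> \<Lambda>"
    unfolding \<Lambda>_def by (rule Max_ge) (use \<open>finite S\<close> in auto)
  moreover have "\<Lambda> < 1"
    using \<open>finite S\<close> d by (simp add: \<Lambda>_def)
  moreover have "AE x in M. \<bar>\<alpha> n x\<bar> \<le> \<Lambda>" if "n \<in> S" for n
    using d[OF that] d_le[OF that] by (auto elim: eventually_mono)
  ultimately show ?thesis
    by (intro that[of \<Lambda>]) auto
qed

lemma ennreal_le_suminf: "(f k :: ennreal) \<le> suminf f"
  using sum_le_suminf[of f "{k}"] by simp

lemma le_root_of_suminf_ennreal: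
  fixes a :: "nat \<Rightarrow> real"
  assumes S: "S = (\<Sum>j. ennreal (a j powr r))" "S \<noteq> \<infinity>" and a: "0 \<le> a k" and r: "0 < r"
  shows "a k \<le> enn2real S powr (1 / r)"
proof -
  obtain s where s: "S = ennreal s" "0 \<le> s"
    using S(2) by (cases S) auto
  have "ennreal (a k powr r) \<le> S"
    unfolding S(1) by (rule ennreal_le_suminf)
  then have "a k powr r \<le> s"
    using s by simp
  then have "(a k powr r) powr (1 / r) \<le> s powr (1 / r)"
    using r by (intro powr_mono2) auto
  then show ?thesis
    using a r s by (simp add: powr_powr)
qed

lemma linear_map_diff_combination:
  fixes k :: nat
  assumes add: "\<And>u v. B (\<lambda>x. u x + v x) = (\<lambda>x. B u x + B v x)"
    and cmult: "\<And>c u. B (\<lambda>x. c * u x) = (\<lambda>x. c * (B u x :: real))"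
  shows "B (\<lambda>x. g x - (\<Sum>m<k. c m * e m x)) = (\<lambda>x. B g x - (\<Sum>m<k. c m * B (e m) x))"
proof -
  have sum: "B (\<lambda>x. \<Sum>j\<in>S. w j x) = (\<lambda>x. \<Sum>j\<in>S. B (w j) x)" if "finite S" for S w
    using that
  proof (induction S rule: finite_induct)
    case empty
    show ?case
      using cmult[of 0 "\<lambda>_. 0"] by simp
  next
    case (insert j S)
    then show ?case
      using add[of "w j" "\<lambda>x. \<Sum>j\<in>S. w j x"] by simp
  qed
  have diff: "B (\<lambda>x. u x - v x) = (\<lambda>x. B u x - B v x)" for u v
    using add[of u "\<lambda>x. -1 * v x"] cmult[of "-1" v] by simp
  have "B (\<lambda>x. \<Sum>m<k. c m * e m x) = (\<lambda>x. \<Sum>m<k. B (\<lambda>y. c m * e m y) x)"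
    by (rule sum) simp
  also have "\<dots> = (\<lambda>x. \<Sum>m<k. c m * B (e m) x)"
    by (simp add: cmult)
  finally show ?thesis
    by (simp add: diff)
qed

section \<open>The affine maps \<open>L_n^{-1}\<close> and the operator \<open>A\<close>\<close>

locale partition_interval =
  fixes xs :: "nat \<Rightarrow> real" and N :: nat
  assumes N_pos: "0 < N" and part: "partition xs N"
begin

abbreviation "I \<equiv> Ival xs N"

lemma xs_less: "i < j \<Longrightarrow> j \<le> N \<Longrightarrow> xs i < xs j"
proof (induction j)
  case (Suc j)
  have "xs j < xs (Suc j)"
    using part Suc.prems by (simp add: partition_def)
  then show ?case
    using Suc by (cases "i = j") auto
qed simp

lemma xs_le: "i \<le> j \<Longrightarrow> j \<le> N \<Longrightarrow> xs i \<le> xs j"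
  using xs_less by (cases "i = j") (auto intro: less_imp_le)

lemma I_length_pos: "xs 0 < xs N"
  using xs_less N_pos by simp

lemma piece_length_pos: "n \<in> {1..N} \<Longrightarrow> xs (n - 1) < xs n"
  using xs_less[of "n - 1" n] by auto

lemma sum_piece_ratios: "(\<Sum>n\<in>{1..N}. ennreal ((xs n - xs (n - 1)) / (xs N - xs 0))) = 1"
proof -
  have "(\<Sum>n\<in>{1..M}. xs n - xs (n - 1)) = xs M - xs 0" for M
    by (induction M) (auto simp: sum.atLeast_Suc_atMost)
  then have "(\<Sum>n\<in>{1..N}. (xs n - xs (n - 1)) / (xs N - xs 0)) = 1"
    using I_length_pos by (simp flip: sum_divide_distrib)
  moreover have "0 \<le> (xs n - xs (n - 1)) / (xs N - xs 0)" if "n \<in> {1..N}" for n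
    using piece_length_pos[OF that] I_length_pos by simp
  ultimately show ?thesis
    using sum_ennreal[of "{1..N}" "\<lambda>n. (xs n - xs (n - 1)) / (xs N - xs 0)"] by simp
qed

lemma sets_I [measurable]: "I \<in> sets lebesgue"
  by (simp add: Ival_def)

lemma sets_subI [measurable]: "subI xs n \<in> sets lebesgue"
  by (simp add: subI_def)

lemma subI_subset: "subI xs n \<subseteq> {xs (n - 1) .. xs n}"
  by (auto simp: subI_def)

lemma subI_subset_I:
  assumes "n \<in> {1..N}"
  shows "subI xs n \<subseteq> I"
proof -
  have "xs 0 \<le> xs (n - 1)" "xs n \<le> xs N"
    using assms xs_le by auto
  then show ?thesis
    using subI_subset[of n] by (auto simp: Ival_def)
qed

lemma subI_disjoint:
  assumes "n \<in> {1..N}" "m \<in> {1..N}" "n \<noteq> m"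
  shows "subI xs n \<inter> subI xs m = {}"
proof -
  have "subI xs n \<inter> subI xs m = {}" if "n < m" "n \<in> {1..N}" "m \<in> {1..N}" for n m
  proof -
    have "xs n \<le> xs (m - 1)" "m \<noteq> 1"
      using that xs_le by auto
    then show ?thesis
      using subI_subset[of n] by (auto simp: subI_def)
  qed
  then show ?thesis
    using assms by (metis inf_commute linorder_neqE_nat)
qed

lemma subI_cover:
  assumes x: "x \<in> I"
  obtains n where "n \<in> {1..N}" "x \<in> subI xs n"
proof (cases "x \<le> xs 1")
  case True
  then show ?thesis
    using that[of 1] x N_pos by (auto simp: subI_def Ival_def)
next
  case False
  define n where "n = (LEAST n. x \<le> xs n)"
  have xN: "x \<le> xs N" using x by (simp add: Ival_def)
  have n: "x \<le> xs n" "n \<le> N"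
    unfolding n_def using xN by (auto intro: LeastI Least_le)
  have "n \<noteq> 0" "n \<noteq> 1"
    using n False xs_less[of 0 1] N_pos by (cases "n = 0"; auto)+
  moreover have "\<not> x \<le> xs (n - 1)"
    unfolding n_def by (rule not_less_Least) (use \<open>n \<noteq> 0\<close> in \<open>simp add: n_def\<close>)
  ultimately show ?thesis
    using that[of n] n by (auto simp: subI_def)
qed

lemma sum_over_pieces:
  assumes "n \<in> {1..N}" "x \<in> subI xs n"
  shows "(\<Sum>m\<in>{1..N}. indicator (subI xs m) x * h m) = (h n :: real)"
proof -
  have "indicator (subI xs m) x = (0::real)" if "m \<in> {1..N}" "m \<noteq> n" for m
    using subI_disjoint[of n m] that assms by (auto simp: indicator_def)
  then have "(\<Sum>m\<in>{1..N}. indicator (subI xs m) x * h m) = (\<Sum>m\<in>{n}. indicator (subI xs m) x * h m)"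
    using assms by (intro sum.mono_neutral_right) auto
  then show ?thesis
    using assms by simp
qed

lemma Linv_affine:
  "Linv xs N n x = xs 0 - (xs N - xs 0) / (xs n - xs (n - 1)) * xs (n - 1)
     + (xs N - xs 0) / (xs n - xs (n - 1)) * x"
  unfolding Linv_def right_diff_distrib by linarith

lemma Linv_measurable:
  assumes "n \<in> {1..N}"
  shows "Linv xs N n \<in> lebesgue \<rightarrow>\<^sub>M lebesgue"
proof -
  have "(xs N - xs 0) / (xs n - xs (n - 1)) \<noteq> 0"
    using piece_length_pos[OF assms] I_length_pos by simp
  then show ?thesis
    unfolding Linv_affine[abs_def]
    using lebesgue_affine_measurable[where c = "\<lambda>_::real. (xs N - xs 0) / (xs n - xs (n - 1))"]
    by simp
qed

lemma Linv_in_I_iff: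
  assumes "n \<in> {1..N}"
  shows "Linv xs N n x \<in> I \<longleftrightarrow> x \<in> {xs (n - 1) .. xs n}"
proof -
  define c where "c = (xs N - xs 0) / (xs n - xs (n - 1))"
  have c: "0 < c" "c * (xs n - xs (n - 1)) = xs N - xs 0"
    using piece_length_pos[OF assms] I_length_pos by (simp_all add: c_def)
  have "Linv xs N n x \<in> I \<longleftrightarrow> 0 \<le> c * (x - xs (n - 1)) \<and> c * (x - xs (n - 1)) \<le> c * (xs n - xs (n - 1))"
    using c by (auto simp: Linv_def Ival_def c_def)
  also have "\<dots> \<longleftrightarrow> x \<in> {xs (n - 1) .. xs n}"
    using c(1) by (auto simp: zero_le_mult_iff mult_le_cancel_left_pos)
  finally show ?thesis .
qed

lemma Linv_in_I: "n \<in> {1..N} \<Longrightarrow> x \<in> subI xs n \<Longrightarrow> Linv xs N n x \<in> I"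
  using Linv_in_I_iff subI_subset by blast

lemma nn_integral_lebesgue_on_I:
  "(\<integral>\<^sup>+x. f x \<partial>lebesgue_on I) = (\<integral>\<^sup>+x. f x * indicator I x \<partial>lebesgue)"
  by (rule nn_integral_restrict_space) simp

lemma measurable_comp_Linv:
  assumes n: "n \<in> {1..N}" and G: "G \<in> borel_measurable (lebesgue_on I)"
  shows "(\<lambda>x. indicator (subI xs n) x * G (Linv xs N n x) :: real) \<in> borel_measurable (lebesgue_on I)"
proof -
  define G' where "G' y = (if y \<in> I then G y else 0)" for y
  have "G' \<in> borel_measurable lebesgue"
    unfolding G'_def[abs_def] by (rule borel_measurable_if_I[OF G sets_I])
  then have "(\<lambda>x. G' (Linv xs N n x)) \<in> borel_measurable lebesgue"
    by (rule measurable_compose[OF Linv_measurable[OF n]])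
  then have "(\<lambda>x. indicator (subI xs n) x * G' (Linv xs N n x)) \<in> borel_measurable lebesgue"
    by measurable
  also have "(\<lambda>x. indicator (subI xs n) x * G' (Linv xs N n x)) = (\<lambda>x. indicator (subI xs n) x * G (Linv xs N n x))"
    using Linv_in_I[OF n] by (auto simp: G'_def indicator_def fun_eq_iff)
  finally show ?thesis
    by (rule measurable_restrict_space1)
qed

lemma nn_integral_comp_Linv:
  assumes n: "n \<in> {1..N}" and G: "G \<in> borel_measurable (lebesgue_on I)"
  shows "(\<integral>\<^sup>+x. ennreal (indicator (subI xs n) x * G (Linv xs N n x)) \<partial>lebesgue_on I)
    = ennreal ((xs n - xs (n - 1)) / (xs N - xs 0)) * (\<integral>\<^sup>+y. ennreal (G y) \<partial>lebesgue_on I)"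
proof -
  define c where "c = (xs N - xs 0) / (xs n - xs (n - 1))"
  define t where "t = xs 0 - c * xs (n - 1)"
  define F where "F y = ennreal (if y \<in> I then G y else 0)" for y
  have c: "0 < c" using piece_length_pos[OF n] I_length_pos by (simp add: c_def)
  have Linv: "Linv xs N n x = t + c * x" for x
    unfolding Linv_affine t_def c_def by simp
  have F: "F \<in> borel_measurable lebesgue"
    unfolding F_def using borel_measurable_if_I[OF G sets_I] by measurable
  have "(\<integral>\<^sup>+x. ennreal (indicator (subI xs n) x * G (Linv xs N n x)) \<partial>lebesgue_on I)
      = (\<integral>\<^sup>+x. F (t + c * x) \<partial>lebesgue)"
    unfolding nn_integral_lebesgue_on_I
  proof (rule nn_integral_cong_AE)
    show "AE x in lebesgue. ennreal (indicator (subI xs n) x * G (Linv xs N n x)) * indicator I x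
        = F (t + c * x)"
      \<comment> \<open>the two sides can only differ at the endpoint \<open>x_{n-1}\<close> missing from \<open>I_n\<close>\<close>
      using AE_completion[OF AE_lborel_singleton[of "xs (n - 1)"]]
    proof eventually_elim
      case (elim x)
      show ?case
      proof (cases "x \<in> subI xs n")
        case True
        then show ?thesis
          using subI_subset_I[OF n] Linv_in_I[OF n] by (auto simp: F_def Linv)
      next
        case False
        then have "Linv xs N n x \<notin> I"
          using elim n Linv_in_I_iff[OF n] by (auto simp: subI_def split: if_splits)
        then show ?thesis
          using False by (simp add: F_def Linv)
      qed
    qed
  qed
  also have "\<dots> = ennreal (1 / c) * (\<integral>\<^sup>+y. F y \<partial>lebesgue)"
    using nn_integral_real_affine_lebesgue[OF F, of c t] c
    by (simp add: ennreal_mult[symmetric] mult.assoc[symmetric])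
  also have "(\<integral>\<^sup>+y. F y \<partial>lebesgue) = (\<integral>\<^sup>+y. ennreal (G y) \<partial>lebesgue_on I)"
    unfolding nn_integral_lebesgue_on_I
    by (rule nn_integral_cong) (auto simp: F_def indicator_def)
  finally show ?thesis
    by (simp add: c_def)
qed

lemma AE_comp_Linv:
  assumes n: "n \<in> {1..N}" and P: "AE y in lebesgue_on I. P y"
  shows "AE x in lebesgue_on I. x \<in> subI xs n \<longrightarrow> P (Linv xs N n x)"
proof -
  obtain Z where Z: "{y \<in> space (lebesgue_on I). \<not> P y} \<subseteq> Z"
      "emeasure (lebesgue_on I) Z = 0" "Z \<in> sets (lebesgue_on I)"
    using P by (rule AE_E)
  have Zm: "(indicator Z :: real \<Rightarrow> real) \<in> borel_measurable (lebesgue_on I)"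
    using Z(3) by simp
  have "(\<integral>\<^sup>+x. ennreal (indicator (subI xs n) x * indicator Z (Linv xs N n x)) \<partial>lebesgue_on I)
      = ennreal ((xs n - xs (n - 1)) / (xs N - xs 0)) * (\<integral>\<^sup>+y. ennreal (indicator Z y) \<partial>lebesgue_on I)"
    by (rule nn_integral_comp_Linv[OF n Zm])
  also have "(\<integral>\<^sup>+y. ennreal (indicator Z y) \<partial>lebesgue_on I) = 0"
    using Z(2,3) by (simp add: ennreal_indicator)
  finally have "AE x in lebesgue_on I. ennreal (indicator (subI xs n) x * indicator Z (Linv xs N n x)) = 0"
    using measurable_comp_Linv[OF n Zm] by (simp add: nn_integral_0_iff_AE)
  then show ?thesis
  proof (rule eventually_mono, intro impI)
    fix x assume "ennreal (indicator (subI xs n) x * indicator Z (Linv xs N n x)) = 0"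
      and x: "x \<in> subI xs n"
    then have "Linv xs N n x \<notin> Z"
      by (simp add: indicator_def)
    then show "P (Linv xs N n x)"
      using Z(1) Linv_in_I[OF n x] by auto
  qed
qed

definition fractal_A :: "(nat \<Rightarrow> real \<Rightarrow> real) \<Rightarrow> (real \<Rightarrow> real) \<Rightarrow> real \<Rightarrow> real" where
  "fractal_A \<alpha> g x = (\<Sum>n\<in>{1..N}. indicator (subI xs n) x * (\<alpha> n (Linv xs N n x) * g (Linv xs N n x)))"

lemma fractal_T_zero: "fractal_T xs N \<alpha> f (\<lambda>_. 0) g x = f x + fractal_A \<alpha> g x"
  by (simp add: fractal_T_def fractal_A_def)

lemma fractal_A_on_piece:
  "n \<in> {1..N} \<Longrightarrow> x \<in> subI xs n \<Longrightarrow> fractal_A \<alpha> g x = \<alpha> n (Linv xs N n x) * g (Linv xs N n x)"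
  unfolding fractal_A_def by (rule sum_over_pieces)

lemma fractal_A_outside: "x \<notin> I \<Longrightarrow> fractal_A \<alpha> g x = 0"
  using subI_subset_I by (force simp: fractal_A_def intro: sum.neutral)

lemma fractal_A_add: "fractal_A \<alpha> (\<lambda>y. u y + v y) x = fractal_A \<alpha> u x + fractal_A \<alpha> v x"
  by (simp add: fractal_A_def algebra_simps sum.distrib)

lemma fractal_A_cmult: "fractal_A \<alpha> (\<lambda>y. c * u y) x = c * fractal_A \<alpha> u x"
  unfolding fractal_A_def sum_distrib_left by (rule sum.cong) (simp_all add: ac_simps)

lemma fractal_A_measurable:
  assumes "\<And>n. n \<in> {1..N} \<Longrightarrow> \<alpha> n \<in> borel_measurable (lebesgue_on I)"
    and "g \<in> borel_measurable (lebesgue_on I)"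
  shows "fractal_A \<alpha> g \<in> borel_measurable (lebesgue_on I)"
  unfolding fractal_A_def[abs_def]
  using assms by (intro borel_measurable_sum measurable_comp_Linv) measurable

end

section \<open>Contraction estimates and the Neumann series\<close>

locale fractal_operator = partition_interval +
  fixes \<alpha> :: "nat \<Rightarrow> real \<Rightarrow> real" and \<Lambda> :: real
  assumes \<alpha>_measurable: "\<And>n. n \<in> {1..N} \<Longrightarrow> \<alpha> n \<in> borel_measurable (lebesgue_on I)"
    and \<Lambda>_pos: "0 < \<Lambda>" and \<Lambda>_less_1: "\<Lambda> < 1"
    and \<alpha>_bound: "\<And>n. n \<in> {1..N} \<Longrightarrow> AE x in lebesgue_on I. \<bar>\<alpha> n x\<bar> \<le> \<Lambda>"
begin

abbreviation "A \<equiv> fractal_A \<alpha>"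

lemma A_measurable: "g \<in> borel_measurable (lebesgue_on I) \<Longrightarrow> A g \<in> borel_measurable (lebesgue_on I)"
  using fractal_A_measurable \<alpha>_measurable by blast

lemma funpow_A_measurable:
  "f \<in> borel_measurable (lebesgue_on I) \<Longrightarrow> (A ^^ k) f \<in> borel_measurable (lebesgue_on I)"
  by (induction k) (simp_all add: A_measurable)

lemma abs_A_powr:
  "\<bar>A g x\<bar> powr r = (\<Sum>n\<in>{1..N}. indicator (subI xs n) x * \<bar>\<alpha> n (Linv xs N n x) * g (Linv xs N n x)\<bar> powr r)"
proof (cases "x \<in> I")
  case True
  then obtain n where n: "n \<in> {1..N}" "x \<in> subI xs n"
    by (rule subI_cover)
  show ?thesis
    by (simp only: fractal_A_on_piece[OF n] sum_over_pieces[OF n])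
next
  case False
  then have "x \<notin> subI xs n" if "n \<in> {1..N}" for n
    using subI_subset_I that by blast
  then show ?thesis
    using False by (simp add: fractal_A_outside)
qed

lemma nn_integral_abs_mult_powr_le:
  assumes n: "n \<in> {1..N}" and r: "0 < r" and g: "g \<in> borel_measurable (lebesgue_on I)"
  shows "(\<integral>\<^sup>+y. ennreal (\<bar>\<alpha> n y * g y\<bar> powr r) \<partial>lebesgue_on I)
      \<le> ennreal (\<Lambda> powr r) * (\<integral>\<^sup>+y. ennreal (\<bar>g y\<bar> powr r) \<partial>lebesgue_on I)"
proof -
  have "AE y in lebesgue_on I. ennreal (\<bar>\<alpha> n y * g y\<bar> powr r) \<le> ennreal (\<Lambda> powr r * \<bar>g y\<bar> powr r)"
    using \<alpha>_bound[OF n]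
    by eventually_elim (use r in \<open>auto simp: abs_mult powr_mult intro!: mult_right_mono powr_mono2\<close>)
  then have "(\<integral>\<^sup>+y. ennreal (\<bar>\<alpha> n y * g y\<bar> powr r) \<partial>lebesgue_on I)
      \<le> (\<integral>\<^sup>+y. ennreal (\<Lambda> powr r) * ennreal (\<bar>g y\<bar> powr r) \<partial>lebesgue_on I)"
    by (intro nn_integral_mono_AE) (simp add: ennreal_mult)
  also have "\<dots> = ennreal (\<Lambda> powr r) * (\<integral>\<^sup>+y. ennreal (\<bar>g y\<bar> powr r) \<partial>lebesgue_on I)"
    using g by (intro nn_integral_cmult) measurable
  finally show ?thesis .
qed

lemma nn_integral_abs_A_powr_le:
  assumes r: "0 < r" and g: "g \<in> borel_measurable (lebesgue_on I)"
  shows "(\<integral>\<^sup>+x. ennreal (\<bar>A g x\<bar> powr r) \<partial>lebesgue_on I)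
      \<le> ennreal (\<Lambda> powr r) * (\<integral>\<^sup>+x. ennreal (\<bar>g x\<bar> powr r) \<partial>lebesgue_on I)"
proof -
  define G where "G n y = \<bar>\<alpha> n y * g y\<bar> powr r" for n y
  have G: "G n \<in> borel_measurable (lebesgue_on I)" if "n \<in> {1..N}" for n
    unfolding G_def[abs_def] using \<alpha>_measurable[OF that] g by measurable
  have "ennreal (\<bar>A g x\<bar> powr r) = (\<Sum>n\<in>{1..N}. ennreal (indicator (subI xs n) x * G n (Linv xs N n x)))"
    for x unfolding abs_A_powr G_def by (rule sum_ennreal[symmetric]) simp
  then have "(\<integral>\<^sup>+x. ennreal (\<bar>A g x\<bar> powr r) \<partial>lebesgue_on I)
      = (\<integral>\<^sup>+x. (\<Sum>n\<in>{1..N}. ennreal (indicator (subI xs n) x * G n (Linv xs N n x))) \<partial>lebesgue_on I)"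
    by simp
  also have "\<dots> = (\<Sum>n\<in>{1..N}. \<integral>\<^sup>+x. ennreal (indicator (subI xs n) x * G n (Linv xs N n x)) \<partial>lebesgue_on I)"
  proof (rule nn_integral_sum)
    fix n assume n: "n \<in> {1..N}"
    show "(\<lambda>x. ennreal (indicator (subI xs n) x * G n (Linv xs N n x))) \<in> borel_measurable (lebesgue_on I)"
      using measurable_comp_Linv[OF n G[OF n]] by measurable
  qed
  also have "\<dots> = (\<Sum>n\<in>{1..N}. ennreal ((xs n - xs (n - 1)) / (xs N - xs 0)) * (\<integral>\<^sup>+y. ennreal (G n y) \<partial>lebesgue_on I))"
    using nn_integral_comp_Linv[OF _ G] by simp
  also have "\<dots> \<le> (\<Sum>n\<in>{1..N}. ennreal ((xs n - xs (n - 1)) / (xs N - xs 0)) *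
      (ennreal (\<Lambda> powr r) * (\<integral>\<^sup>+x. ennreal (\<bar>g x\<bar> powr r) \<partial>lebesgue_on I)))"
    unfolding G_def using nn_integral_abs_mult_powr_le[OF _ r g] by (intro sum_mono mult_left_mono) simp_all
  also have "\<dots> = ennreal (\<Lambda> powr r) * (\<integral>\<^sup>+x. ennreal (\<bar>g x\<bar> powr r) \<partial>lebesgue_on I)"
    unfolding sum_distrib_right[symmetric] sum_piece_ratios by simp
  finally show ?thesis .
qed

lemma AE_abs_A_le:
  assumes g: "AE y in lebesgue_on I. \<bar>g y\<bar> \<le> M" and M: "0 \<le> M"
  shows "AE x in lebesgue_on I. \<bar>A g x\<bar> \<le> \<Lambda> * M"
proof -
  have "AE x in lebesgue_on I. \<forall>n\<in>{1..N}. x \<in> subI xs n \<longrightarrow>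
      \<bar>\<alpha> n (Linv xs N n x)\<bar> \<le> \<Lambda> \<and> \<bar>g (Linv xs N n x)\<bar> \<le> M"
    using \<alpha>_bound g by (intro AE_finite_allI AE_comp_Linv) auto
  then show ?thesis
  proof eventually_elim
    case (elim x)
    show ?case
    proof (cases "x \<in> I")
      case True
      then obtain n where n: "n \<in> {1..N}" "x \<in> subI xs n"
        by (rule subI_cover)
      then show ?thesis
        using elim \<Lambda>_pos by (simp add: fractal_A_on_piece abs_mult mult_mono)
    next
      case False
      then show ?thesis
        using M \<Lambda>_pos by (simp add: fractal_A_outside)
    qed
  qed
qed

definition neumann :: "(real \<Rightarrow> real) \<Rightarrow> real \<Rightarrow> real" where
  "neumann f x = (\<Sum>k. (A ^^ k) f x)"

lemma neumann_measurable:
  "f \<in> borel_measurable (lebesgue_on I) \<Longrightarrow> neumann f \<in> borel_measurable (lebesgue_on I)"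
  unfolding neumann_def[abs_def] using funpow_A_measurable by measurable

lemma neumann_fixpoint:
  assumes summable: "AE y in lebesgue_on I. summable (\<lambda>k. (A ^^ k) f y)"
  shows "AE x in lebesgue_on I. neumann f x = f x + A (neumann f) x"
proof -
  have "AE x in lebesgue_on I. \<forall>n\<in>{1..N}. x \<in> subI xs n \<longrightarrow> summable (\<lambda>k. (A ^^ k) f (Linv xs N n x))"
    using summable by (intro AE_finite_allI AE_comp_Linv) auto
  then show ?thesis
    using summable AE_space
  proof eventually_elim
    case (elim x)
    then obtain n where n: "n \<in> {1..N}" "x \<in> subI xs n"
      using subI_cover by auto
    let ?y = "Linv xs N n x"
    have "(\<Sum>k. (A ^^ Suc k) f x) = neumann f x - f x"
      using suminf_split_head[of "\<lambda>k. (A ^^ k) f x"] elim unfolding neumann_def by simp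
    then have "neumann f x = f x + (\<Sum>k. (A ^^ Suc k) f x)"
      by simp
    also have "(\<Sum>k. (A ^^ Suc k) f x) = (\<Sum>k. \<alpha> n ?y * (A ^^ k) f ?y)"
      using n by (simp add: fractal_A_on_piece)
    also have "\<dots> = \<alpha> n ?y * neumann f ?y"
      using elim n by (simp add: neumann_def suminf_mult)
    also have "\<dots> = A (neumann f) x"
      using n by (simp add: fractal_A_on_piece)
    finally show ?case .
  qed
qed

end

section \<open>The space \<open>L^p(I)\<close>\<close>

locale Lp_interval = partition_interval +
  fixes p :: ereal
  assumes p_ge_1: "1 \<le> p"
begin

abbreviation "E \<equiv> Lp p xs N"
abbreviation "nrm \<equiv> Lp_norm p xs N"

lemma p_cases:
  obtains (finite) r where "p = ereal r" "1 \<le> r" | (infinite) "p = \<infinity>"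
  using p_ge_1 by (cases p) auto

lemma mem_E_finite:
  "p = ereal r \<Longrightarrow> u \<in> E \<longleftrightarrow>
     u \<in> borel_measurable (lebesgue_on I) \<and> integrable (lebesgue_on I) (\<lambda>x. \<bar>u x\<bar> powr r)"
  by (simp add: Lp_def)

lemma nrm_finite: "p = ereal r \<Longrightarrow> nrm u = (\<integral>x. \<bar>u x\<bar> powr r \<partial>lebesgue_on I) powr (1 / r)"
  by (simp add: Lp_norm_def)

lemma integral_powr_eq_nrm_powr:
  assumes "p = ereal r" "1 \<le> r"
  shows "(\<integral>x. \<bar>u x\<bar> powr r \<partial>lebesgue_on I) = nrm u powr r"
  using assms(2) by (simp add: nrm_finite[OF assms(1)] powr_powr integral_nonneg)

lemma nrm_infinite: "p = \<infinity> \<Longrightarrow> nrm u = real_of_ereal (esssup (lebesgue_on I) (\<lambda>x. ereal \<bar>u x\<bar>))"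
  by (simp add: Lp_norm_def)

lemma mem_E_infinite:
  assumes p: "p = \<infinity>"
  shows "u \<in> E \<longleftrightarrow> u \<in> borel_measurable (lebesgue_on I) \<and> (\<exists>M. AE x in lebesgue_on I. \<bar>u x\<bar> \<le> M)"
proof -
  have "(\<exists>M. AE x in lebesgue_on I. \<bar>u x\<bar> \<le> M)"
    if es: "esssup (lebesgue_on I) (\<lambda>x. ereal \<bar>u x\<bar>) < \<infinity>"
  proof -
    have "esssup (lebesgue_on I) (\<lambda>x. ereal \<bar>u x\<bar>)
        < ereal (real_of_ereal (esssup (lebesgue_on I) (\<lambda>x. ereal \<bar>u x\<bar>)) + 1)"
      using es by (cases "esssup (lebesgue_on I) (\<lambda>x. ereal \<bar>u x\<bar>)") auto
    then obtain d where "d < real_of_ereal (esssup (lebesgue_on I) (\<lambda>x. ereal \<bar>u x\<bar>)) + 1"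
      "AE x in lebesgue_on I. \<bar>u x\<bar> \<le> d"
      by (rule esssup_less_AE_le)
    then show ?thesis
      by blast
  qed
  moreover have "esssup (lebesgue_on I) (\<lambda>x. ereal \<bar>u x\<bar>) < \<infinity>"
    if "u \<in> borel_measurable (lebesgue_on I)" "AE x in lebesgue_on I. \<bar>u x\<bar> \<le> M" for M
  proof -
    have "esssup (lebesgue_on I) (\<lambda>x. ereal \<bar>u x\<bar>) \<le> ereal M"
      using that by (intro esssup_I) auto
    then show ?thesis
      using le_less_trans[of _ "ereal M" \<infinity>] by simp
  qed
  ultimately show ?thesis
    using p by (auto simp: Lp_def)
qed

lemma E_measurable: "u \<in> E \<Longrightarrow> u \<in> borel_measurable (lebesgue_on I)"
  by (simp add: Lp_def)

lemma not_AE_False: "\<not> (AE x in lebesgue_on I. False)"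
proof -
  have "emeasure (lebesgue_on I) (space (lebesgue_on I)) = ennreal (xs N - xs 0)"
    using I_length_pos by (simp add: emeasure_restrict_space Ival_def)
  then show ?thesis
    using I_length_pos by (simp add: ae_filter_eq_bot_iff eventually_False)
qed

lemma nrm_nonneg: "0 \<le> nrm u"
proof (cases rule: p_cases)
  case infinite
  show ?thesis
  proof (cases "esssup (lebesgue_on I) (\<lambda>x. ereal \<bar>u x\<bar>)")
    case (real d)
    have "AE x in lebesgue_on I. \<bar>u x\<bar> \<le> d"
      using esssup_AE[of "\<lambda>x. ereal \<bar>u x\<bar>" "lebesgue_on I"] real by simp
    have "\<not> d < 0"
    proof
      assume "d < 0"
      have "AE x in lebesgue_on I. False"
        using \<open>AE x in lebesgue_on I. \<bar>u x\<bar> \<le> d\<close> by eventually_elim (use \<open>d < 0\<close> in linarith)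
      then show False
        using not_AE_False by simp
    qed
    then show ?thesis
      using real by (simp add: nrm_infinite[OF infinite])
  qed (simp_all add: nrm_infinite[OF infinite])
qed (simp add: Lp_norm_def)

lemma nrm_infinite_le:
  assumes "p = \<infinity>" "u \<in> borel_measurable (lebesgue_on I)" "0 \<le> M" "AE x in lebesgue_on I. \<bar>u x\<bar> \<le> M"
  shows "nrm u \<le> M"
proof -
  have "esssup (lebesgue_on I) (\<lambda>x. ereal \<bar>u x\<bar>) \<le> ereal M"
    using assms by (intro esssup_I) auto
  then show ?thesis
    using assms(3) unfolding nrm_infinite[OF assms(1)]
    by (cases "esssup (lebesgue_on I) (\<lambda>x. ereal \<bar>u x\<bar>)") auto
qed

lemma AE_abs_le_nrm:
  assumes p: "p = \<infinity>" and u: "u \<in> E"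
  shows "AE x in lebesgue_on I. \<bar>u x\<bar> \<le> nrm u"
proof -
  have es: "esssup (lebesgue_on I) (\<lambda>x. ereal \<bar>u x\<bar>) < \<infinity>"
    using p u by (simp add: Lp_def)
  show ?thesis
    using esssup_AE[of "\<lambda>x. ereal \<bar>u x\<bar>" "lebesgue_on I"]
    by eventually_elim (use es in \<open>cases "esssup (lebesgue_on I) (\<lambda>x. ereal \<bar>u x\<bar>)";
      simp add: nrm_infinite[OF p]\<close>)
qed

lemma nrm_cong:
  assumes "u \<in> borel_measurable (lebesgue_on I)" "v \<in> borel_measurable (lebesgue_on I)"
    and "AE x in lebesgue_on I. u x = v x"
  shows "nrm u = nrm v"
proof (cases rule: p_cases)
  case (finite r)
  have "(\<integral>x. \<bar>u x\<bar> powr r \<partial>lebesgue_on I) = (\<integral>x. \<bar>v x\<bar> powr r \<partial>lebesgue_on I)"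
    using assms by (intro integral_cong_AE) (measurable, auto elim: eventually_mono)
  then show ?thesis
    by (simp add: nrm_finite[OF finite(1)])
next
  case infinite
  have "esssup (lebesgue_on I) (\<lambda>x. ereal \<bar>u x\<bar>) = esssup (lebesgue_on I) (\<lambda>x. ereal \<bar>v x\<bar>)"
    using assms by (intro esssup_AE_cong) (measurable, auto elim: eventually_mono)
  then show ?thesis
    by (simp add: nrm_infinite[OF infinite])
qed

lemma nrm_zero: "nrm (\<lambda>x. 0) = 0"
proof (cases rule: p_cases)
  case infinite
  then have "nrm (\<lambda>x. 0) \<le> 0"
    by (intro nrm_infinite_le) auto
  then show ?thesis
    using nrm_nonneg by (simp add: order_antisym)
qed (simp add: Lp_norm_def)

lemma nrm_minus: "nrm (\<lambda>x. - u x) = nrm u"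
  by (simp add: Lp_norm_def)

lemma AE_zero_if_nrm_eq_0:
  assumes u: "u \<in> E" and z: "nrm u = 0"
  shows "AE x in lebesgue_on I. u x = 0"
proof (cases rule: p_cases)
  case (finite r)
  have "integrable (lebesgue_on I) (\<lambda>x. \<bar>u x\<bar> powr r)"
    using u by (simp add: mem_E_finite[OF finite(1)])
  moreover have "(\<integral>x. \<bar>u x\<bar> powr r \<partial>lebesgue_on I) = 0"
    using z finite(2) by (simp add: integral_powr_eq_nrm_powr[OF finite])
  ultimately have "AE x in lebesgue_on I. \<bar>u x\<bar> powr r = 0"
    by (simp add: integral_nonneg_eq_0_iff_AE)
  then show ?thesis
    by (auto elim: eventually_mono)
next
  case infinite
  show ?thesis
    using AE_abs_le_nrm[OF infinite u] z by (auto elim: eventually_mono)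
qed

lemma E_zero: "(\<lambda>x. 0) \<in> E"
proof (cases rule: p_cases)
  case (finite r)
  show ?thesis by (simp add: mem_E_finite[OF finite(1)])
next
  case infinite
  show ?thesis by (auto simp: mem_E_infinite[OF infinite] intro!: exI[of _ 0])
qed

lemma E_dominated:
  assumes D: "D \<in> E" and g: "g \<in> borel_measurable (lebesgue_on I)"
    and le: "AE x in lebesgue_on I. \<bar>g x\<bar> \<le> c * \<bar>D x\<bar>"
  shows "g \<in> E"
proof -
  have le': "AE x in lebesgue_on I. \<bar>g x\<bar> \<le> \<bar>c\<bar> * \<bar>D x\<bar>"
    using le
  proof eventually_elim
    case (elim x)
    have "c * \<bar>D x\<bar> \<le> \<bar>c\<bar> * \<bar>D x\<bar>"
      by (rule mult_right_mono) simp_all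
    with elim show ?case by linarith
  qed
  show ?thesis
  proof (cases rule: p_cases)
    case (finite r)
    have "integrable (lebesgue_on I) (\<lambda>x. \<bar>c\<bar> powr r * \<bar>D x\<bar> powr r)"
      using D by (simp add: mem_E_finite[OF finite(1)])
    then have "integrable (lebesgue_on I) (\<lambda>x. \<bar>g x\<bar> powr r)"
    proof (rule Bochner_Integration.integrable_bound)
      show "AE x in lebesgue_on I. norm (\<bar>g x\<bar> powr r) \<le> norm (\<bar>c\<bar> powr r * \<bar>D x\<bar> powr r)"
        using le' by eventually_elim (use finite(2) in \<open>simp add: powr_mono2 flip: powr_mult\<close>)
    qed (use g in measurable)
    then show ?thesis
      using g by (simp add: mem_E_finite[OF finite(1)])
  next
    case infinite
    obtain M where "AE x in lebesgue_on I. \<bar>D x\<bar> \<le> M"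
      using D by (auto simp: mem_E_infinite[OF infinite])
    with le' have "AE x in lebesgue_on I. \<bar>g x\<bar> \<le> \<bar>c\<bar> * M"
    proof eventually_elim
      case (elim x)
      have "\<bar>c\<bar> * \<bar>D x\<bar> \<le> \<bar>c\<bar> * M"
        using elim by (intro mult_left_mono) simp_all
      with elim show ?case by linarith
    qed
    then show ?thesis
      using g by (auto simp: mem_E_infinite[OF infinite])
  qed
qed

lemma E_cmult:
  assumes "u \<in> E"
  shows "(\<lambda>x. c * u x) \<in> E"
proof (rule E_dominated[OF assms, of _ "\<bar>c\<bar>"])
  show "(\<lambda>x. c * u x) \<in> borel_measurable (lebesgue_on I)"
    using E_measurable[OF assms] by measurable
qed (simp add: abs_mult)

lemma E_add:
  assumes u: "u \<in> E" and v: "v \<in> E"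
  shows "(\<lambda>x. u x + v x) \<in> E"
proof (cases rule: p_cases)
  case (finite r)
  define c where "c = (1/2::real) powr (1 - r)"
  have "integrable (lebesgue_on I) (\<lambda>x. c * \<bar>u x\<bar> powr r + c * \<bar>v x\<bar> powr r)"
    using u v by (simp add: mem_E_finite[OF finite(1)])
  then have "integrable (lebesgue_on I) (\<lambda>x. \<bar>u x + v x\<bar> powr r)"
  proof (rule Bochner_Integration.integrable_bound)
    show "AE x in lebesgue_on I. norm (\<bar>u x + v x\<bar> powr r) \<le> norm (c * \<bar>u x\<bar> powr r + c * \<bar>v x\<bar> powr r)"
    proof (rule AE_I2)
      fix x
      have "\<bar>u x + v x\<bar> powr r \<le> c * \<bar>u x\<bar> powr r + c * \<bar>v x\<bar> powr r"
        using abs_add_powr_le_weighted[of r "1/2" "u x" "v x"] finite(2) by (simp add: c_def)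
      moreover have "0 \<le> c"
        by (simp add: c_def)
      ultimately show "norm (\<bar>u x + v x\<bar> powr r) \<le> norm (c * \<bar>u x\<bar> powr r + c * \<bar>v x\<bar> powr r)"
        by simp
    qed
  qed (use E_measurable[OF u] E_measurable[OF v] in measurable)
  moreover have "(\<lambda>x. u x + v x) \<in> borel_measurable (lebesgue_on I)"
    using E_measurable[OF u] E_measurable[OF v] by measurable
  ultimately show ?thesis
    by (simp add: mem_E_finite[OF finite(1)])
next
  case infinite
  obtain M1 M2 where "AE x in lebesgue_on I. \<bar>u x\<bar> \<le> M1" "AE x in lebesgue_on I. \<bar>v x\<bar> \<le> M2"
    using u v by (auto simp: mem_E_infinite[OF infinite])
  then have "AE x in lebesgue_on I. \<bar>u x + v x\<bar> \<le> M1 + M2"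
    by eventually_elim linarith
  moreover have "(\<lambda>x. u x + v x) \<in> borel_measurable (lebesgue_on I)"
    using E_measurable[OF u] E_measurable[OF v] by measurable
  ultimately show ?thesis
    by (auto simp: mem_E_infinite[OF infinite])
qed

lemma E_diff: "u \<in> E \<Longrightarrow> v \<in> E \<Longrightarrow> (\<lambda>x. u x - v x) \<in> E"
  using E_add[of u "\<lambda>x. -1 * v x"] E_cmult[of v "-1"] by simp

lemma E_sum: "finite S \<Longrightarrow> (\<And>j. j \<in> S \<Longrightarrow> u j \<in> E) \<Longrightarrow> (\<lambda>x. \<Sum>j\<in>S. u j x) \<in> E"
  by (induction S rule: finite_induct) (simp_all add: E_zero E_add)

lemma integral_powr_add_le:
  assumes p: "p = ereal r" "1 \<le> r" and u: "u \<in> E" and v: "v \<in> E" and t: "0 < t" "t < 1"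
  shows "(\<integral>x. \<bar>u x + v x\<bar> powr r \<partial>lebesgue_on I)
    \<le> t powr (1 - r) * (\<integral>x. \<bar>u x\<bar> powr r \<partial>lebesgue_on I) + (1 - t) powr (1 - r) * (\<integral>x. \<bar>v x\<bar> powr r \<partial>lebesgue_on I)"
proof -
  have int: "integrable (lebesgue_on I) (\<lambda>x. \<bar>w x\<bar> powr r)" if "w \<in> E" for w
    using that by (simp add: mem_E_finite[OF p(1)])
  have "(\<integral>x. \<bar>u x + v x\<bar> powr r \<partial>lebesgue_on I)
      \<le> (\<integral>x. t powr (1 - r) * \<bar>u x\<bar> powr r + (1 - t) powr (1 - r) * \<bar>v x\<bar> powr r \<partial>lebesgue_on I)"
  proof (rule integral_mono)
    show "integrable (lebesgue_on I) (\<lambda>x. \<bar>u x + v x\<bar> powr r)"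
      by (rule int[OF E_add[OF u v]])
    show "integrable (lebesgue_on I) (\<lambda>x. t powr (1 - r) * \<bar>u x\<bar> powr r + (1 - t) powr (1 - r) * \<bar>v x\<bar> powr r)"
      using int[OF u] int[OF v] by simp
    show "\<bar>u x + v x\<bar> powr r \<le> t powr (1 - r) * \<bar>u x\<bar> powr r + (1 - t) powr (1 - r) * \<bar>v x\<bar> powr r" for x
      by (rule abs_add_powr_le_weighted[OF p(2) t])
  qed
  also have "\<dots> = t powr (1 - r) * (\<integral>x. \<bar>u x\<bar> powr r \<partial>lebesgue_on I) + (1 - t) powr (1 - r) * (\<integral>x. \<bar>v x\<bar> powr r \<partial>lebesgue_on I)"
    using int[OF u] int[OF v] by simp
  finally show ?thesis .
qed

text \<open>The convexity estimate with the weight \<open>t = \<parallel>u\<parallel> / (\<parallel>u\<parallel> + \<parallel>v\<parallel>)\<close> gives Minkowski's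
  inequality.\<close>

lemma nrm_add_if_nrm_eq_0:
  assumes u: "u \<in> E" and v: "v \<in> E" and z: "nrm u = 0"
  shows "nrm (\<lambda>x. u x + v x) = nrm v"
proof (rule nrm_cong)
  show "AE x in lebesgue_on I. u x + v x = v x"
    using AE_zero_if_nrm_eq_0[OF u z] by eventually_elim simp
qed (use E_measurable[OF E_add[OF u v]] E_measurable[OF v] in auto)

lemma nrm_add_le:
  assumes u: "u \<in> E" and v: "v \<in> E"
  shows "nrm (\<lambda>x. u x + v x) \<le> nrm u + nrm v"
proof (cases "nrm u = 0 \<or> nrm v = 0")
  case True
  then show ?thesis
    using nrm_add_if_nrm_eq_0[OF u v] nrm_add_if_nrm_eq_0[OF v u] nrm_nonneg[of u] nrm_nonneg[of v]
    by (auto simp: add.commute)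
next
  case False
  then have pos: "0 < nrm u" "0 < nrm v"
    using nrm_nonneg[of u] nrm_nonneg[of v] by auto
  show ?thesis
  proof (cases rule: p_cases)
    case (finite r)
    define t where "t = nrm u / (nrm u + nrm v)"
    have t: "0 < t" "t < 1" "1 - t = nrm v / (nrm u + nrm v)"
      using pos by (simp_all add: t_def field_simps)
    have "nrm (\<lambda>x. u x + v x) powr r
        \<le> t powr (1 - r) * nrm u powr r + (1 - t) powr (1 - r) * nrm v powr r"
      using integral_powr_add_le[OF finite u v t(1,2)] by (simp add: integral_powr_eq_nrm_powr[OF finite])
    also have "\<dots> = (nrm u + nrm v) powr r"
      unfolding t(3) unfolding t_def by (rule weighted_powr_sum_eq[OF pos])
    finally show ?thesis
      by (rule powr_le_cancel_base) (use finite(2) pos in auto)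
  next
    case infinite
    have "AE x in lebesgue_on I. \<bar>u x + v x\<bar> \<le> nrm u + nrm v"
      using AE_abs_le_nrm[OF infinite u] AE_abs_le_nrm[OF infinite v] by eventually_elim linarith
    then show ?thesis
      using pos E_measurable[OF E_add[OF u v]] by (intro nrm_infinite_le[OF infinite]) auto
  qed
qed

lemma nrm_diff_le: "u \<in> E \<Longrightarrow> v \<in> E \<Longrightarrow> nrm (\<lambda>x. u x - v x) \<le> nrm u + nrm v"
  using nrm_add_le[of u "\<lambda>x. - v x"] E_cmult[of v "-1"] nrm_minus[of v] by simp


lemma nn_integral_powr_div_eq:
  assumes p: "p = ereal r" "1 \<le> r" and h: "h \<in> E" and c: "0 < c"
  shows "(\<integral>\<^sup>+x. ennreal ((\<bar>h x\<bar> / c) powr r) \<partial>lebesgue_on I) = ennreal ((nrm h / c) powr r)"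
proof -
  have int: "integrable (lebesgue_on I) (\<lambda>x. \<bar>h x\<bar> powr r)"
    using h by (simp add: mem_E_finite[OF p(1)])
  have "(\<lambda>x. ennreal ((\<bar>h x\<bar> / c) powr r)) = (\<lambda>x. ennreal (\<bar>h x\<bar> powr r / c powr r))"
    using c by (simp add: powr_divide)
  then have "(\<integral>\<^sup>+x. ennreal ((\<bar>h x\<bar> / c) powr r) \<partial>lebesgue_on I)
      = ennreal (\<integral>x. \<bar>h x\<bar> powr r / c powr r \<partial>lebesgue_on I)"
    using int by (simp add: nn_integral_eq_integral)
  also have "\<dots> = ennreal ((nrm h / c) powr r)"
    using c nrm_nonneg[of h] by (simp add: integral_powr_eq_nrm_powr[OF p] powr_divide)
  finally show ?thesis .
qed

lemma nn_integral_suminf_powr_div_finite: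
  assumes p: "p = ereal r" "1 \<le> r" and h: "\<And>k. h k \<in> E" and c: "\<And>k. 0 < c k"
    and summable: "summable (\<lambda>k. (nrm (h k) / c k) powr r)"
  shows "(\<integral>\<^sup>+x. (\<Sum>k. ennreal ((\<bar>h k x\<bar> / c k) powr r)) \<partial>lebesgue_on I) \<noteq> \<infinity>"
proof -
  have "(\<integral>\<^sup>+x. (\<Sum>k. ennreal ((\<bar>h k x\<bar> / c k) powr r)) \<partial>lebesgue_on I)
      = (\<Sum>k. \<integral>\<^sup>+x. ennreal ((\<bar>h k x\<bar> / c k) powr r) \<partial>lebesgue_on I)"
    using E_measurable[OF h] by (intro nn_integral_suminf) measurable
  also have "\<dots> = (\<Sum>k. ennreal ((nrm (h k) / c k) powr r))"
    using nn_integral_powr_div_eq[OF p h c] by simp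
  also have "\<dots> = ennreal (\<Sum>k. (nrm (h k) / c k) powr r)"
    using summable by (intro suminf_ennreal2) auto
  finally show ?thesis
    by simp
qed

text \<open>For finite \<open>p = r\<close> the dominating function is \<open>D = (\<Sum>k (|h_k| / \<tau>^k)^r)^{1/r}\<close> with
  \<open>\<tau> = \<surd>\<sigma>\<close>, which lies in \<open>L^r\<close> because \<open>\<parallel>h_k\<parallel> / \<tau>^k \<le> C \<tau>^k\<close>.\<close>

lemma E_geometric_domination:
  assumes h: "\<And>k. h k \<in> E" and \<sigma>: "0 < \<sigma>" "\<sigma> < 1" and bound: "\<And>k. nrm (h k) \<le> C * \<sigma> ^ k"
  obtains D \<tau> where "D \<in> E" "0 \<le> \<tau>" "\<tau> < 1" "AE x in lebesgue_on I. \<forall>k. \<bar>h k x\<bar> \<le> D x * \<tau> ^ k"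
proof (cases rule: p_cases)
  case infinite
  have "AE x in lebesgue_on I. \<forall>k. \<bar>h k x\<bar> \<le> C * \<sigma> ^ k"
    unfolding AE_all_countable
  proof
    fix k
    show "AE x in lebesgue_on I. \<bar>h k x\<bar> \<le> C * \<sigma> ^ k"
      using AE_abs_le_nrm[OF infinite h[of k]] by eventually_elim (use bound[of k] in linarith)
  qed
  moreover have "(\<lambda>_. C) \<in> E"
    by (auto simp: mem_E_infinite[OF infinite])
  ultimately show ?thesis
    using that[of "\<lambda>_. C" \<sigma>] \<sigma> by auto
next
  case (finite r)
  define \<tau> where "\<tau> = sqrt \<sigma>"
  have \<tau>: "0 < \<tau>" "\<tau> < 1" "\<sigma> = \<tau> ^ 2"
    using \<sigma> by (simp_all add: \<tau>_def)
  have r: "0 < r"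
    using finite(2) by simp
  define S where "S x = (\<Sum>k. ennreal ((\<bar>h k x\<bar> / \<tau> ^ k) powr r))" for x
  have S_measurable: "S \<in> borel_measurable (lebesgue_on I)"
    unfolding S_def[abs_def] using E_measurable[OF h] by measurable
  have "summable (\<lambda>k. (nrm (h k) / \<tau> ^ k) powr r)"
  proof (rule summable_comparison_test')
    show "summable (\<lambda>k. (C * \<tau> ^ k) powr r)"
      using \<tau> r powr_less_mono2[of r \<tau> 1] bound[of 0] nrm_nonneg[of "h 0"]
      by (simp add: powr_mult power_powr_commute summable_mult summable_geometric)
    have "\<sigma> ^ k = \<tau> ^ k * \<tau> ^ k" for k
      using \<tau>(3) by (simp add: power_mult[symmetric] mult_2 power_add)
    then show "norm ((nrm (h k) / \<tau> ^ k) powr r) \<le> (C * \<tau> ^ k) powr r" for k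
      using bound[of k] \<tau> r nrm_nonneg[of "h k"] by (simp add: divide_le_eq mult.assoc powr_mono2)
  qed
  then have S_finite: "(\<integral>\<^sup>+x. S x \<partial>lebesgue_on I) \<noteq> \<infinity>"
    unfolding S_def using \<tau> by (intro nn_integral_suminf_powr_div_finite[OF finite h]) simp_all
  define D where "D x = enn2real (S x) powr (1 / r)" for x
  have "D \<in> E"
  proof -
    have "(\<integral>\<^sup>+x. ennreal (norm (\<bar>D x\<bar> powr r)) \<partial>lebesgue_on I) \<le> (\<integral>\<^sup>+x. S x \<partial>lebesgue_on I)"
      using r by (intro nn_integral_mono) (simp add: D_def powr_powr ennreal_enn2real_if)
    then have "integrable (lebesgue_on I) (\<lambda>x. \<bar>D x\<bar> powr r)"
      using S_finite S_measurable unfolding integrable_iff_bounded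
      by (auto simp: D_def top.not_eq_extremum le_less_trans)
    moreover have "D \<in> borel_measurable (lebesgue_on I)"
      unfolding D_def[abs_def] using S_measurable by measurable
    ultimately show ?thesis
      by (simp add: mem_E_finite[OF finite(1)])
  qed
  moreover have "AE x in lebesgue_on I. \<forall>k. \<bar>h k x\<bar> \<le> D x * \<tau> ^ k"
    using nn_integral_PInf_AE[OF S_measurable S_finite]
  proof eventually_elim
    case (elim x)
    have "\<bar>h k x\<bar> / \<tau> ^ k \<le> D x" for k
      unfolding D_def using r \<tau> by (intro le_root_of_suminf_ennreal[OF S_def elim]) simp_all
    then show ?case
      using \<tau> by (simp add: divide_le_eq)
  qed
  ultimately show ?thesis
    using \<tau> by (intro that) auto
qed

lemma mem_closed_span: "e m \<in> E \<Longrightarrow> e m \<in> closed_span p xs N e"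
  unfolding closed_span_def
proof (intro CollectI conjI allI impI exI)
  fix \<epsilon> :: real assume "0 < \<epsilon>"
  have "(\<lambda>x. e m x - (\<Sum>j<Suc m. (if j = m then 1 else 0) * e j x)) = (\<lambda>x. 0)"
    by (simp add: if_distrib cong: if_cong)
  then show "nrm (\<lambda>x. e m x - (\<Sum>j<Suc m. (if j = m then 1 else 0) * e j x)) < \<epsilon>"
    using \<open>0 < \<epsilon>\<close> nrm_zero by simp
qed

text \<open>The coefficients of \<open>g\<close> with respect to \<open>e\<close> are those of \<open>B g\<close> with respect to
  \<open>f\<close>.\<close>

lemma schauder_sequence_if_isomorphic_to_basis:
  assumes basis: "schauder_basis_of p xs N E f"
    and e: "\<And>m. e m \<in> E"
    and B_E: "\<And>u. u \<in> E \<Longrightarrow> B u \<in> E"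
    and B_add: "\<And>u v. B (\<lambda>x. u x + v x) = (\<lambda>x. B u x + B v x)"
    and B_cmult: "\<And>c u. B (\<lambda>x. c * u x) = (\<lambda>x. c * B u x)"
    and B_e: "\<And>m. AE x in lebesgue_on I. B (e m) x = f m x"
    and bounded: "\<And>u. u \<in> E \<Longrightarrow> nrm (B u) \<le> K * nrm u"
    and bounded_below: "\<And>u. u \<in> E \<Longrightarrow> nrm u \<le> K' * nrm (B u)"
  shows "schauder_sequence p xs N e"
proof -
  have f: "f m \<in> E" for m
    using basis by (simp add: schauder_basis_of_def)
  define R where "R g c k x = g x - (\<Sum>m<k. c m * e m x)" for g c k x
  define R' where "R' g c k x = B g x - (\<Sum>m<k. c m * f m x)" for g c k x
  have R_E: "R g c k \<in> E" if "g \<in> E" for g c k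
    unfolding R_def[abs_def] using that e by (intro E_diff E_sum E_cmult) auto
  have R'_E: "R' g c k \<in> E" if "g \<in> E" for g c k
    unfolding R'_def[abs_def] using that f B_E by (intro E_diff E_sum E_cmult) auto
  have nrm_B_R: "nrm (B (R g c k)) = nrm (R' g c k)" if g: "g \<in> E" for g c k
  proof (rule nrm_cong)
    have "B (R g c k) = (\<lambda>x. B g x - (\<Sum>m<k. c m * B (e m) x))"
      unfolding R_def[abs_def] by (rule linear_map_diff_combination[OF B_add B_cmult])
    moreover have "AE x in lebesgue_on I. \<forall>m. B (e m) x = f m x"
      using B_e by (simp add: AE_all_countable)
    ultimately show "AE x in lebesgue_on I. B (R g c k) x = R' g c k x"
      by (auto simp: R'_def elim: eventually_mono)
  qed (use R_E R'_E B_E g in \<open>auto intro: E_measurable\<close>)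
  have expansion: "\<exists>!c. (\<lambda>k. nrm (R g c k)) \<longlonglongrightarrow> 0" if g: "g \<in> E" for g
  proof -
    have "\<exists>!c. (\<lambda>k. nrm (R' g c k)) \<longlonglongrightarrow> 0"
      using basis B_E[OF g] unfolding schauder_basis_of_def R'_def[abs_def] by blast
    then obtain c where c: "(\<lambda>k. nrm (R' g c k)) \<longlonglongrightarrow> 0"
      and c_unique: "\<forall>c'. (\<lambda>k. nrm (R' g c' k)) \<longlonglongrightarrow> 0 \<longrightarrow> c' = c"
      by (rule ex1E)
    show ?thesis
    proof (rule ex1I[of _ c])
      show "(\<lambda>k. nrm (R g c k)) \<longlonglongrightarrow> 0"
        using bounded_below[OF R_E[OF g]] nrm_B_R[OF g] nrm_nonneg
        by (intro Lim_null_comparison[OF _ tendsto_mult_right_zero[OF c, of K']]) simp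
    next
      fix c' assume c': "(\<lambda>k. nrm (R g c' k)) \<longlonglongrightarrow> 0"
      have "(\<lambda>k. nrm (R' g c' k)) \<longlonglongrightarrow> 0"
        using bounded[OF R_E[OF g]] nrm_B_R[OF g] nrm_nonneg
        by (intro Lim_null_comparison[OF _ tendsto_mult_right_zero[OF c', of K]]) simp
      then show "c' = c"
        using c_unique by blast
    qed
  qed
  show ?thesis
    unfolding schauder_sequence_def schauder_basis_of_def
  proof (intro conjI allI ballI)
    show "e m \<in> closed_span p xs N e" for m
      by (rule mem_closed_span[OF e])
    show "\<exists>!c. (\<lambda>k. nrm (\<lambda>x. g x - (\<Sum>m<k. c m * e m x))) \<longlonglongrightarrow> 0"
      if "g \<in> closed_span p xs N e" for g
      using expansion[of g] that by (simp add: closed_span_def R_def[abs_def])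
  qed
qed

end

section \<open>The operator \<open>A\<close> on \<open>L^p(I)\<close>\<close>

locale fractal_Lp = fractal_operator + Lp_interval
begin

lemma integral_abs_A_powr_le:
  assumes p: "p = ereal r" "1 \<le> r" and u: "u \<in> E"
  shows "integrable (lebesgue_on I) (\<lambda>x. \<bar>A u x\<bar> powr r)"
    and "(\<integral>x. \<bar>A u x\<bar> powr r \<partial>lebesgue_on I) \<le> \<Lambda> powr r * (\<integral>x. \<bar>u x\<bar> powr r \<partial>lebesgue_on I)"
proof -
  have u_meas: "u \<in> borel_measurable (lebesgue_on I)"
    and u_int: "integrable (lebesgue_on I) (\<lambda>x. \<bar>u x\<bar> powr r)"
    using u by (simp_all add: mem_E_finite[OF p(1)])
  have Au_meas: "A u \<in> borel_measurable (lebesgue_on I)"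
    by (rule A_measurable[OF u_meas])
  have "(\<integral>\<^sup>+x. ennreal (\<bar>u x\<bar> powr r) \<partial>lebesgue_on I) = ennreal (\<integral>x. \<bar>u x\<bar> powr r \<partial>lebesgue_on I)"
    by (rule nn_integral_eq_integral[OF u_int]) simp
  moreover have "0 \<le> (\<integral>x. \<bar>u x\<bar> powr r \<partial>lebesgue_on I)"
    by (rule Bochner_Integration.integral_nonneg) simp
  ultimately have le: "(\<integral>\<^sup>+x. ennreal (\<bar>A u x\<bar> powr r) \<partial>lebesgue_on I)
      \<le> ennreal (\<Lambda> powr r * (\<integral>x. \<bar>u x\<bar> powr r \<partial>lebesgue_on I))"
    using nn_integral_abs_A_powr_le[of r u] p(2) u_meas by (simp add: ennreal_mult)
  then have "(\<integral>\<^sup>+x. ennreal (norm (\<bar>A u x\<bar> powr r)) \<partial>lebesgue_on I) < \<infinity>"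
    by (simp add: le_less_trans)
  then show Au_int: "integrable (lebesgue_on I) (\<lambda>x. \<bar>A u x\<bar> powr r)"
    unfolding integrable_iff_bounded using Au_meas by simp
  have "(\<integral>\<^sup>+x. ennreal (\<bar>A u x\<bar> powr r) \<partial>lebesgue_on I) = ennreal (\<integral>x. \<bar>A u x\<bar> powr r \<partial>lebesgue_on I)"
    by (rule nn_integral_eq_integral[OF Au_int]) simp
  with le show "(\<integral>x. \<bar>A u x\<bar> powr r \<partial>lebesgue_on I) \<le> \<Lambda> powr r * (\<integral>x. \<bar>u x\<bar> powr r \<partial>lebesgue_on I)"
    using \<open>0 \<le> (\<integral>x. \<bar>u x\<bar> powr r \<partial>lebesgue_on I)\<close> by simp
qed

lemma A_mem_E_nrm_le:
  assumes u: "u \<in> E"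
  shows "A u \<in> E" and "nrm (A u) \<le> \<Lambda> * nrm u"
proof -
  have "A u \<in> E \<and> nrm (A u) \<le> \<Lambda> * nrm u"
  proof (cases rule: p_cases)
    case (finite r)
    have "nrm (A u) powr r \<le> (\<Lambda> * nrm u) powr r"
      using integral_abs_A_powr_le(2)[OF finite u] \<Lambda>_pos nrm_nonneg[of u]
      by (simp add: integral_powr_eq_nrm_powr[OF finite] powr_mult)
    then have "nrm (A u) \<le> \<Lambda> * nrm u"
      by (rule powr_le_cancel_base) (use finite(2) \<Lambda>_pos nrm_nonneg[of u] in auto)
    then show ?thesis
      using integral_abs_A_powr_le(1)[OF finite u] A_measurable[OF E_measurable[OF u]]
      by (simp add: mem_E_finite[OF finite(1)])
  next
    case infinite
    have "AE x in lebesgue_on I. \<bar>A u x\<bar> \<le> \<Lambda> * nrm u"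
      using AE_abs_A_le[OF AE_abs_le_nrm[OF infinite u] nrm_nonneg] .
    moreover have "A u \<in> borel_measurable (lebesgue_on I)"
      using A_measurable[OF E_measurable[OF u]] .
    ultimately show ?thesis
      using \<Lambda>_pos nrm_nonneg[of u] by (auto simp: mem_E_infinite[OF infinite] intro: nrm_infinite_le[OF infinite])
  qed
  then show "A u \<in> E" "nrm (A u) \<le> \<Lambda> * nrm u"
    by auto
qed

lemma nrm_diff_A_le: "u \<in> E \<Longrightarrow> nrm (\<lambda>x. u x - A u x) \<le> (1 + \<Lambda>) * nrm u"
  using nrm_diff_le[of u "A u"] A_mem_E_nrm_le[of u] by (simp add: algebra_simps)

lemma nrm_le_diff_A: "u \<in> E \<Longrightarrow> nrm u \<le> 1 / (1 - \<Lambda>) * nrm (\<lambda>x. u x - A u x)"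
  using nrm_add_le[of "\<lambda>x. u x - A u x" "A u"] A_mem_E_nrm_le[of u] E_diff[of u "A u"] \<Lambda>_less_1
  by (simp add: field_simps)

lemma neumann_mem_E:
  assumes f: "f \<in> E"
  shows "neumann f \<in> E" and "AE x in lebesgue_on I. neumann f x = f x + A (neumann f) x"
proof -
  have iter_E: "(A ^^ k) f \<in> E" for k
    by (induction k) (simp_all add: f A_mem_E_nrm_le)
  have iter_nrm: "nrm ((A ^^ k) f) \<le> nrm f * \<Lambda> ^ k" for k
  proof (induction k)
    case (Suc k)
    then show ?case
      using A_mem_E_nrm_le(2)[OF iter_E[of k]] \<Lambda>_pos by (simp add: mult_left_mono order_trans)
  qed simp
  obtain D \<tau> where D: "D \<in> E" "0 \<le> \<tau>" "\<tau> < 1"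
    and bound: "AE x in lebesgue_on I. \<forall>k. \<bar>(A ^^ k) f x\<bar> \<le> D x * \<tau> ^ k"
    by (rule E_geometric_domination[of "\<lambda>k. (A ^^ k) f", OF iter_E \<Lambda>_pos \<Lambda>_less_1 iter_nrm])
  have summable: "AE x in lebesgue_on I. summable (\<lambda>k. (A ^^ k) f x) \<and> \<bar>neumann f x\<bar> \<le> D x / (1 - \<tau>)"
    using bound
  proof eventually_elim
    case (elim x)
    then show ?case
      using geometric_dominated_series[OF D(2,3), of "\<lambda>k. (A ^^ k) f x" "D x"] by (simp add: neumann_def)
  qed
  show "neumann f \<in> E"
  proof (rule E_dominated[OF D(1) neumann_measurable[OF E_measurable[OF f]]])
    show "AE x in lebesgue_on I. \<bar>neumann f x\<bar> \<le> 1 / (1 - \<tau>) * \<bar>D x\<bar>"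
      using summable
    proof eventually_elim
      case (elim x)
      have "D x / (1 - \<tau>) \<le> \<bar>D x\<bar> / (1 - \<tau>)"
        using D(3) by (intro divide_right_mono) auto
      then show ?case
        using elim by simp
    qed
  qed
  show "AE x in lebesgue_on I. neumann f x = f x + A (neumann f) x"
    using summable by (intro neumann_fixpoint) (auto elim: eventually_mono)
qed

lemma fractal_fun_zero:
  assumes f: "f \<in> E"
  shows "fractal_fun p xs N \<alpha> f (\<lambda>_. 0) \<in> E"
    and "AE x in lebesgue_on I. fractal_fun p xs N \<alpha> f (\<lambda>_. 0) x = f x + A (fractal_fun p xs N \<alpha> f (\<lambda>_. 0)) x"
proof -
  define P where "P g \<longleftrightarrow> g \<in> E \<and> nrm (\<lambda>x. fractal_T xs N \<alpha> f (\<lambda>_. 0) g x - g x) = 0" for g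
  have residual_E: "(\<lambda>x. fractal_T xs N \<alpha> f (\<lambda>_. 0) g x - g x) \<in> E" if "g \<in> E" for g
    unfolding fractal_T_zero using that f by (intro E_diff E_add A_mem_E_nrm_le)
  \<comment> \<open>\<open>fractal_fun\<close> chooses some almost-everywhere fixed point in \<open>E\<close>; the Neumann series is one\<close>
  have "P (neumann f)"
  proof -
    have "nrm (\<lambda>x. fractal_T xs N \<alpha> f (\<lambda>_. 0) (neumann f) x - neumann f x) = nrm (\<lambda>x. 0)"
      using neumann_mem_E[OF f] E_zero residual_E
      by (intro nrm_cong) (auto simp: fractal_T_zero intro: E_measurable elim: eventually_mono)
    then show ?thesis
      using neumann_mem_E(1)[OF f] nrm_zero by (simp add: P_def)
  qed
  then have "P (fractal_fun p xs N \<alpha> f (\<lambda>_. 0))"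
    unfolding fractal_fun_def P_def[symmetric] by (rule someI[of P])
  then have e: "fractal_fun p xs N \<alpha> f (\<lambda>_. 0) \<in> E"
    and "nrm (\<lambda>x. fractal_T xs N \<alpha> f (\<lambda>_. 0) (fractal_fun p xs N \<alpha> f (\<lambda>_. 0)) x - fractal_fun p xs N \<alpha> f (\<lambda>_. 0) x) = 0"
    by (simp_all add: P_def)
  then have "AE x in lebesgue_on I.
      fractal_T xs N \<alpha> f (\<lambda>_. 0) (fractal_fun p xs N \<alpha> f (\<lambda>_. 0)) x - fractal_fun p xs N \<alpha> f (\<lambda>_. 0) x = 0"
    by (intro AE_zero_if_nrm_eq_0 residual_E)
  then show "AE x in lebesgue_on I. fractal_fun p xs N \<alpha> f (\<lambda>_. 0) x = f x + A (fractal_fun p xs N \<alpha> f (\<lambda>_. 0)) x"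
    by eventually_elim (simp add: fractal_T_zero)
  show "fractal_fun p xs N \<alpha> f (\<lambda>_. 0) \<in> E"
    by (rule e)
qed

theorem schauder_sequence_fractal_fun:
  assumes basis: "schauder_basis_of p xs N E f"
  shows "schauder_sequence p xs N (\<lambda>m. fractal_fun p xs N \<alpha> (f m) (\<lambda>_. 0))"
proof (rule schauder_sequence_if_isomorphic_to_basis[OF basis, where B = "\<lambda>u x. u x - A u x"])
  have f: "f m \<in> E" for m
    using basis by (simp add: schauder_basis_of_def)
  show "fractal_fun p xs N \<alpha> (f m) (\<lambda>_. 0) \<in> E" for m
    by (rule fractal_fun_zero(1)[OF f])
  show "AE x in lebesgue_on I. fractal_fun p xs N \<alpha> (f m) (\<lambda>_. 0) x - A (fractal_fun p xs N \<alpha> (f m) (\<lambda>_. 0)) x = f m x" for m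
    using fractal_fun_zero(2)[OF f[of m]] by eventually_elim simp
  show "(\<lambda>x. u x - A u x) \<in> E" if "u \<in> E" for u
    using that by (intro E_diff A_mem_E_nrm_le)
  show "(\<lambda>x. u x + v x - A (\<lambda>x. u x + v x) x) = (\<lambda>x. u x - A u x + (v x - A v x))" for u v
    by (simp add: fractal_A_add algebra_simps)
  show "(\<lambda>x. c * u x - A (\<lambda>x. c * u x) x) = (\<lambda>x. c * (u x - A u x))" for c u
    by (simp add: fractal_A_cmult algebra_simps)
  show "nrm (\<lambda>x. u x - A u x) \<le> (1 + \<Lambda>) * nrm u" if "u \<in> E" for u
    by (rule nrm_diff_A_le[OF that])
  show "nrm u \<le> 1 / (1 - \<Lambda>) * nrm (\<lambda>x. u x - A u x)" if "u \<in> E" for u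
    by (rule nrm_le_diff_A[OF that])
qed

end

theorem proposition6p11:
  fixes p :: ereal and N :: nat and xs :: "nat \<Rightarrow> real"
    and \<alpha> :: "nat \<Rightarrow> real \<Rightarrow> real" and f :: "nat \<Rightarrow> real \<Rightarrow> real"
  assumes "N \<ge> 2"
    and "partition xs N"
    and "1 \<le> p"
    and "\<forall>n\<in>{1..N}. \<alpha> n \<in> borel_measurable (lebI xs N)"
    and "\<forall>n\<in>{1..N}. esssup (lebI xs N) (\<lambda>x. ereal \<bar>\<alpha> n x\<bar>) < 1"
    and "schauder_basis_of p xs N (Lp p xs N) f"
  shows "schauder_sequence p xs N (\<lambda>m. fractal_fun p xs N \<alpha> (f m) (\<lambda>_. 0))"
proof -
  obtain \<Lambda> where "0 < \<Lambda>" "\<Lambda> < 1" "\<And>n. n \<in> {1..N} \<Longrightarrow> AE x in lebI xs N. \<bar>\<alpha> n x\<bar> \<le> \<Lambda>"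
    using esssup_less_1_uniform_bound[of "{1..N}" "lebI xs N" \<alpha>] assms(5) by auto
  then interpret fractal_Lp xs N \<alpha> \<Lambda> p
    using assms(1-4) by unfold_locales auto
  show ?thesis
    using schauder_sequence_fractal_fun assms(6) .
qed

end
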